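(* Fix $\delta>0$, and for $r\in\mathbb R$ let $\mathrm A_r(\xi):=e^{\delta\langle\xi\rangle^{1/2}}\langle\xi\rangle^r$ for $\xi\in\mathbb R$. Let $s\ge1$ and $c\in(0,1)$. Then, for $\xi,\eta\in\mathbb R$: (i) if $|\xi-\eta|\le c|\eta|$, then $|\mathrm A_s(\xi)-\mathrm A_s(\eta)|\lesssim\mathrm A_{s-\frac34}(\eta)\,\mathrm A_1(\xi-\eta)\,\langle\xi\rangle^{\frac14}$; (ii) if $|\eta|\le c|\xi-\eta|$, then $|\mathrm A_s(\xi)-\mathrm A_s(\eta)|\lesssim\mathrm A_0(\eta)\,\mathrm A_s(\xi-\eta)$; (iii) if $c|\eta|\le|\xi-\eta|\le c^{-1}|\eta|$, then $|\mathrm A_s(\xi)-\mathrm A_s(\eta)|\lesssim\mathrm A_{s-1}(\eta)\,\mathrm A_1(\xi-\eta)$.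
   Context: $\langle\xi\rangle=(1+|\xi|^2)^{1/2}$. Implicit constants may depend on $s$, $c$ and $\delta$ but not on $\xi,\eta$. *)

theory Defs
  imports "HOL-Analysis.Analysis"
begin

definition jb :: "real \<Rightarrow> real" where
  "jb \<xi> = sqrt (1 + \<xi>\<^sup>2)"

definition Aw :: "real \<Rightarrow> real \<Rightarrow> real \<Rightarrow> real" where
  "Aw \<delta> r \<xi> = exp (\<delta> * jb \<xi> powr (1/2)) * jb \<xi> powr r"

end

theory Submission
  imports Defs
begin

(* Write A_r(xi) = F_r(<xi>) with F_r(u) = exp (delta sqrt u) u^r and put x = <xi>, y = <eta>,
   z = <xi - eta>.  Then |x - y| <= z, and subadditivity of sqrt gives
   exp (delta sqrt x) <= exp (delta sqrt y) exp (delta sqrt z).  In regime (i) x and y are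
   comparable, and the mean value theorem bounds |F_s x - F_s y| by
   exp (delta sqrt (max x y)) max(x, y)^(s - 1/2) z.  In regimes (ii) and (iii) no cancellation
   is needed: F_s x and F_s y are bounded separately, using x, y <~ z in (ii) and in addition
   x <~ y in (iii). *)

definition exp_sqrt_powr :: "real \<Rightarrow> real \<Rightarrow> real \<Rightarrow> real" where
  "exp_sqrt_powr \<delta> r u = exp (\<delta> * sqrt u) * u powr r"

lemma Aw_eq_exp_sqrt_powr_jb: "Aw \<delta> r \<xi> = exp_sqrt_powr \<delta> r (jb \<xi>)"
  unfolding Aw_def exp_sqrt_powr_def jb_def by (simp add: powr_half_sqrt)

lemma jb_ge_1: "1 \<le> jb \<xi>"
  unfolding jb_def by simp

lemma abs_le_jb: "\<bar>\<xi>\<bar> \<le> jb \<xi>"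
  unfolding jb_def by (rule real_le_rsqrt) simp

(* jb is the Euclidean norm of (1, xi). *)
lemma jb_add_le: "jb (\<xi> + \<eta>) \<le> jb \<xi> + \<bar>\<eta>\<bar>"
  using real_sqrt_sum_squares_triangle_ineq[of 1 0 \<xi> \<eta>] by (simp add: jb_def)

lemma abs_jb_diff_le: "\<bar>jb \<xi> - jb \<eta>\<bar> \<le> \<bar>\<xi> - \<eta>\<bar>"
  using jb_add_le[of \<eta> "\<xi> - \<eta>"] jb_add_le[of \<xi> "\<eta> - \<xi>"] by auto

lemma jb_le_mult:
  assumes "\<bar>\<xi>\<bar> \<le> K * \<bar>\<eta>\<bar>" and "1 \<le> K"
  shows "jb \<xi> \<le> K * jb \<eta>"
proof -
  have "\<bar>\<xi>\<bar>\<^sup>2 \<le> (K * \<bar>\<eta>\<bar>)\<^sup>2"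
    using assms by (intro power_mono) auto
  moreover have "1 \<le> K\<^sup>2"
    using assms by (simp add: one_le_power)
  ultimately have "1 + \<xi>\<^sup>2 \<le> K\<^sup>2 * (1 + \<eta>\<^sup>2)"
    by (simp add: power_mult_distrib algebra_simps)
  then have "sqrt (1 + \<xi>\<^sup>2) \<le> sqrt (K\<^sup>2 * (1 + \<eta>\<^sup>2))"
    by simp
  then show ?thesis
    using assms by (simp add: jb_def real_sqrt_mult)
qed

lemma exp_sqrt_le_mult:
  assumes "x \<le> y + z" "0 \<le> y" "0 \<le> z" "0 \<le> \<delta>"
  shows "exp (\<delta> * sqrt x) \<le> exp (\<delta> * sqrt y) * exp (\<delta> * sqrt z)"
proof -
  have "sqrt x \<le> sqrt (y + z)"
    using assms by simp
  also have "\<dots> \<le> sqrt y + sqrt z"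
    using assms by (intro sqrt_add_le_add_sqrt)
  finally have "\<delta> * sqrt x \<le> \<delta> * sqrt y + \<delta> * sqrt z"
    using assms by (metis distrib_left mult_left_mono)
  then show ?thesis
    by (simp flip: exp_add)
qed

lemma exp_sqrt_powr_nonneg: "0 \<le> exp_sqrt_powr \<delta> r u"
  unfolding exp_sqrt_powr_def by simp

lemma exp_sqrt_powr_le_mult:
  assumes "x \<le> y + z" "0 \<le> y" "0 \<le> z" "0 \<le> \<delta>"
  shows "exp_sqrt_powr \<delta> s x \<le> exp (\<delta> * sqrt y) * exp (\<delta> * sqrt z) * x powr s"
  unfolding exp_sqrt_powr_def using assms by (intro mult_right_mono exp_sqrt_le_mult) auto

lemma has_real_derivative_exp_sqrt_powr:
  assumes "0 < w"
  shows "(exp_sqrt_powr \<delta> s has_real_derivative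
           exp (\<delta> * sqrt w) * (\<delta> / 2 * w powr (s - 1/2) + s * w powr (s - 1))) (at w)"
proof -
  have h: "w powr (s - 1/2) = w powr s / sqrt w"
    using assms by (simp add: powr_diff powr_half_sqrt)
  show ?thesis
    unfolding exp_sqrt_powr_def[abs_def] h
    using assms by (auto intro!: derivative_eq_intros simp: field_simps)
qed

lemma exp_sqrt_powr_lipschitz:
  assumes "1 \<le> x" "1 \<le> y" "0 \<le> \<delta>" "1/2 \<le> s"
  defines "m \<equiv> max x y"
  shows "\<bar>exp_sqrt_powr \<delta> s x - exp_sqrt_powr \<delta> s y\<bar>
           \<le> (\<delta> / 2 + s) * exp (\<delta> * sqrt m) * m powr (s - 1/2) * \<bar>x - y\<bar>"
proof -
  define D where "D w = exp (\<delta> * sqrt w) * (\<delta> / 2 * w powr (s - 1/2) + s * w powr (s - 1))" for w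
  have "\<bar>D w\<bar> \<le> (\<delta> / 2 + s) * exp (\<delta> * sqrt m) * m powr (s - 1/2)" if "w \<in> {1..m}" for w
  proof -
    have w: "1 \<le> w" "w \<le> m"
      using that by auto
    have "\<delta> / 2 * w powr (s - 1/2) + s * w powr (s - 1) \<le> (\<delta> / 2 + s) * w powr (s - 1/2)"
      using w assms by (simp add: distrib_right mult_left_mono powr_mono)
    also have "\<dots> \<le> (\<delta> / 2 + s) * m powr (s - 1/2)"
      using w assms by (intro mult_left_mono powr_mono2) auto
    finally have "D w \<le> exp (\<delta> * sqrt m) * ((\<delta> / 2 + s) * m powr (s - 1/2))"
      unfolding D_def using w assms by (intro mult_mono) (auto intro: mult_left_mono)
    moreover have "0 \<le> D w"
      unfolding D_def using assms by simp
    ultimately show ?thesis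
      by (simp add: mult_ac)
  qed
  moreover have "(exp_sqrt_powr \<delta> s has_real_derivative D w) (at w within {1..m})" if "w \<in> {1..m}" for w
    unfolding D_def
    by (rule has_field_derivative_at_within, rule has_real_derivative_exp_sqrt_powr) (use that in auto)
  ultimately show ?thesis
    using assms by (intro field_differentiable_bound[of "{1..m}", simplified]) auto
qed

lemma exp_sqrt_powr_diff_le_near:
  assumes "1 \<le> x" "1 \<le> y" "1 \<le> z" "\<bar>x - y\<bar> \<le> z" "x \<le> 2 * y" "y \<le> L * x"
    and "0 \<le> \<delta>" "1/2 \<le> s"
  shows "\<bar>exp_sqrt_powr \<delta> s x - exp_sqrt_powr \<delta> s y\<bar>
           \<le> (\<delta> / 2 + s) * 2 powr (s - 1/2) * L powr (1/4)
              * exp_sqrt_powr \<delta> (s - 3/4) y * exp_sqrt_powr \<delta> 1 z * x powr (1/4)"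
proof -
  define m where "m = max x y"
  have "0 < L"
    using assms by (smt (verit) mult_nonpos_nonneg)
  have exp_m: "exp (\<delta> * sqrt m) \<le> exp (\<delta> * sqrt y) * exp (\<delta> * sqrt z)"
    unfolding m_def using assms by (intro exp_sqrt_le_mult) auto
  have "m powr (s - 1/2) \<le> (2 * y) powr (s - 1/2)"
    unfolding m_def using assms by (intro powr_mono2) auto
  also have "\<dots> = 2 powr (s - 1/2) * y powr (s - 3/4) * y powr (1/4)"
    using assms by (simp add: powr_mult flip: powr_add)
  also have "\<dots> \<le> 2 powr (s - 1/2) * y powr (s - 3/4) * (L powr (1/4) * x powr (1/4))"
    using assms \<open>0 < L\<close> by (intro mult_left_mono) (auto simp flip: powr_mult intro: powr_mono2)
  finally have pow_m:
    "m powr (s - 1/2) \<le> 2 powr (s - 1/2) * y powr (s - 3/4) * (L powr (1/4) * x powr (1/4))" .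
  have "\<bar>exp_sqrt_powr \<delta> s x - exp_sqrt_powr \<delta> s y\<bar>
          \<le> (\<delta> / 2 + s) * exp (\<delta> * sqrt m) * m powr (s - 1/2) * \<bar>x - y\<bar>"
    unfolding m_def using assms by (intro exp_sqrt_powr_lipschitz)
  also have "\<dots> \<le> (\<delta> / 2 + s) * (exp (\<delta> * sqrt y) * exp (\<delta> * sqrt z))
                  * (2 powr (s - 1/2) * y powr (s - 3/4) * (L powr (1/4) * x powr (1/4))) * z"
    using assms exp_m pow_m by (intro mult_mono) auto
  finally show ?thesis
    using assms by (simp add: exp_sqrt_powr_def mult_ac)
qed

lemma exp_sqrt_powr_diff_le_far:
  assumes "1 \<le> x" "1 \<le> y" "1 \<le> z" "x \<le> y + z" "x \<le> 2 * z" "y \<le> z"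
    and "0 \<le> \<delta>" "0 \<le> s"
  shows "\<bar>exp_sqrt_powr \<delta> s x - exp_sqrt_powr \<delta> s y\<bar>
           \<le> (2 powr s + 1) * exp_sqrt_powr \<delta> 0 y * exp_sqrt_powr \<delta> s z"
proof -
  have "exp_sqrt_powr \<delta> s x \<le> exp (\<delta> * sqrt y) * exp (\<delta> * sqrt z) * (2 * z) powr s"
    using assms exp_sqrt_powr_le_mult[of x y z \<delta> s]
    by (smt (verit) exp_gt_zero mult_left_mono mult_pos_pos powr_mono2)
  also have "\<dots> = 2 powr s * exp_sqrt_powr \<delta> 0 y * exp_sqrt_powr \<delta> s z"
    using assms by (simp add: exp_sqrt_powr_def powr_mult)
  finally have x_le: "exp_sqrt_powr \<delta> s x \<le> 2 powr s * exp_sqrt_powr \<delta> 0 y * exp_sqrt_powr \<delta> s z" .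
  have "exp_sqrt_powr \<delta> s y \<le> exp (\<delta> * sqrt y) * (exp (\<delta> * sqrt z) * z powr s)"
    unfolding exp_sqrt_powr_def using assms
    by (intro mult_left_mono order_trans[OF powr_mono2[of s y z]]) auto
  then have y_le: "exp_sqrt_powr \<delta> s y \<le> exp_sqrt_powr \<delta> 0 y * exp_sqrt_powr \<delta> s z"
    using assms by (simp add: exp_sqrt_powr_def)
  show ?thesis
    using x_le y_le exp_sqrt_powr_nonneg[of \<delta> s x] exp_sqrt_powr_nonneg[of \<delta> s y]
    by (simp add: abs_le_iff algebra_simps)
qed

lemma exp_sqrt_powr_diff_le_comparable:
  assumes "1 \<le> x" "1 \<le> y" "1 \<le> z" "x \<le> y + z" "x \<le> K * y" "x \<le> K * z" "y \<le> K * z"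
    and "0 \<le> \<delta>" "1 \<le> s"
  shows "\<bar>exp_sqrt_powr \<delta> s x - exp_sqrt_powr \<delta> s y\<bar>
           \<le> (K powr s + K) * exp_sqrt_powr \<delta> (s - 1) y * exp_sqrt_powr \<delta> 1 z"
proof -
  have "0 < K"
    using assms by (smt (verit) mult_nonpos_nonneg)
  have split: "u powr s = u powr (s - 1) * u" if "0 < u" for u :: real
    using that powr_add[of u "s - 1" 1] by simp
  have "x powr (s - 1) * x \<le> (K * y) powr (s - 1) * (K * z)"
    using assms by (intro mult_mono powr_mono2) auto
  then have "exp_sqrt_powr \<delta> s x \<le> exp (\<delta> * sqrt y) * exp (\<delta> * sqrt z) * ((K * y) powr (s - 1) * (K * z))"
    using assms exp_sqrt_powr_le_mult[of x y z \<delta> s] split[of x]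
    by (smt (verit) exp_gt_zero mult_left_mono mult_pos_pos)
  also have "\<dots> = K powr s * exp_sqrt_powr \<delta> (s - 1) y * exp_sqrt_powr \<delta> 1 z"
    using assms \<open>0 < K\<close> split[of K] by (simp add: exp_sqrt_powr_def powr_mult mult_ac)
  finally have x_le: "exp_sqrt_powr \<delta> s x \<le> K powr s * exp_sqrt_powr \<delta> (s - 1) y * exp_sqrt_powr \<delta> 1 z" .
  have "y \<le> exp (\<delta> * sqrt z) * (K * z)"
    using assms \<open>0 < K\<close> by (smt (verit) mult_le_cancel_right1 one_le_exp_iff mult_nonneg_nonneg real_sqrt_ge_zero)
  then have "exp_sqrt_powr \<delta> s y \<le> exp (\<delta> * sqrt y) * y powr (s - 1) * (exp (\<delta> * sqrt z) * (K * z))"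
    unfolding exp_sqrt_powr_def using assms split[of y] by (simp add: mult.assoc mult_left_mono)
  then have y_le: "exp_sqrt_powr \<delta> s y \<le> K * exp_sqrt_powr \<delta> (s - 1) y * exp_sqrt_powr \<delta> 1 z"
    using assms by (simp add: exp_sqrt_powr_def mult_ac)
  show ?thesis
    using x_le y_le exp_sqrt_powr_nonneg[of \<delta> s x] exp_sqrt_powr_nonneg[of \<delta> s y]
    by (simp add: abs_le_iff algebra_simps)
qed

lemma Aw_nonneg: "0 \<le> Aw \<delta> r \<xi>"
  unfolding Aw_def by simp

lemma Aw_diff_le_near:
  assumes "\<bar>\<xi> - \<eta>\<bar> \<le> c * \<bar>\<eta>\<bar>" "0 \<le> c" "c < 1" "0 \<le> \<delta>" "1/2 \<le> s"
  shows "\<bar>Aw \<delta> s \<xi> - Aw \<delta> s \<eta>\<bar>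
           \<le> (\<delta> / 2 + s) * 2 powr (s - 1/2) * (1 / (1 - c)) powr (1/4)
              * Aw \<delta> (s - 3/4) \<eta> * Aw \<delta> 1 (\<xi> - \<eta>) * jb \<xi> powr (1/4)"
proof -
  define L where "L = 1 / (1 - c)"
  have "c * \<bar>\<eta>\<bar> \<le> \<bar>\<eta>\<bar>"
    using mult_right_mono[of c 1 "\<bar>\<eta>\<bar>"] assms by simp
  moreover have "\<bar>\<xi>\<bar> \<le> \<bar>\<eta>\<bar> + \<bar>\<xi> - \<eta>\<bar>" "\<bar>\<eta>\<bar> \<le> \<bar>\<xi>\<bar> + \<bar>\<xi> - \<eta>\<bar>"
    by (simp_all add: abs_triangle_ineq[of \<eta> "\<xi> - \<eta>", simplified] abs_triangle_ineq4[of \<xi> \<eta>])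
  ultimately have "\<bar>\<xi>\<bar> \<le> 2 * \<bar>\<eta>\<bar>" "\<bar>\<eta>\<bar> \<le> L * \<bar>\<xi>\<bar>" "1 \<le> L"
    using assms unfolding L_def by (simp_all add: field_simps)
  then have "jb \<xi> \<le> 2 * jb \<eta>" "jb \<eta> \<le> L * jb \<xi>"
    by (simp_all add: jb_le_mult)
  moreover have "\<bar>jb \<xi> - jb \<eta>\<bar> \<le> jb (\<xi> - \<eta>)"
    using abs_jb_diff_le[of \<xi> \<eta>] abs_le_jb[of "\<xi> - \<eta>"] by simp
  ultimately show ?thesis
    using assms unfolding Aw_eq_exp_sqrt_powr_jb L_def by (intro exp_sqrt_powr_diff_le_near jb_ge_1) auto
qed

lemma Aw_diff_le_far:
  assumes "\<bar>\<eta>\<bar> \<le> c * \<bar>\<xi> - \<eta>\<bar>" "c \<le> 1" "0 \<le> \<delta>" "0 \<le> s"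
  shows "\<bar>Aw \<delta> s \<xi> - Aw \<delta> s \<eta>\<bar> \<le> (2 powr s + 1) * Aw \<delta> 0 \<eta> * Aw \<delta> s (\<xi> - \<eta>)"
proof -
  have "c * \<bar>\<xi> - \<eta>\<bar> \<le> \<bar>\<xi> - \<eta>\<bar>"
    using mult_right_mono[of c 1 "\<bar>\<xi> - \<eta>\<bar>"] assms by simp
  moreover have "\<bar>\<xi>\<bar> \<le> \<bar>\<eta>\<bar> + \<bar>\<xi> - \<eta>\<bar>"
    using abs_triangle_ineq[of \<eta> "\<xi> - \<eta>"] by simp
  ultimately have "\<bar>\<xi>\<bar> \<le> 2 * \<bar>\<xi> - \<eta>\<bar>" "\<bar>\<eta>\<bar> \<le> 1 * \<bar>\<xi> - \<eta>\<bar>"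
    using assms by simp_all
  then have "jb \<xi> \<le> 2 * jb (\<xi> - \<eta>)" "jb \<eta> \<le> 1 * jb (\<xi> - \<eta>)"
    by (simp_all only: jb_le_mult one_le_numeral order_refl)
  moreover have "jb \<xi> \<le> jb \<eta> + jb (\<xi> - \<eta>)"
    using abs_jb_diff_le[of \<xi> \<eta>] abs_le_jb[of "\<xi> - \<eta>"] by simp
  ultimately show ?thesis
    using assms unfolding Aw_eq_exp_sqrt_powr_jb by (intro exp_sqrt_powr_diff_le_far jb_ge_1) auto
qed

lemma Aw_diff_le_comparable:
  assumes "c * \<bar>\<eta>\<bar> \<le> \<bar>\<xi> - \<eta>\<bar>" "\<bar>\<xi> - \<eta>\<bar> \<le> \<bar>\<eta>\<bar> / c" "0 < c" "0 \<le> \<delta>" "1 \<le> s"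
  shows "\<bar>Aw \<delta> s \<xi> - Aw \<delta> s \<eta>\<bar>
           \<le> ((1 + 1 / c) powr s + (1 + 1 / c)) * Aw \<delta> (s - 1) \<eta> * Aw \<delta> 1 (\<xi> - \<eta>)"
proof -
  define K where "K = 1 + 1 / c"
  have "\<bar>\<eta>\<bar> \<le> \<bar>\<xi> - \<eta>\<bar> / c"
    using assms by (simp add: field_simps)
  moreover have "\<bar>\<xi>\<bar> \<le> \<bar>\<eta>\<bar> + \<bar>\<xi> - \<eta>\<bar>"
    using abs_triangle_ineq[of \<eta> "\<xi> - \<eta>"] by simp
  ultimately have "\<bar>\<xi>\<bar> \<le> K * \<bar>\<eta>\<bar>" "\<bar>\<xi>\<bar> \<le> K * \<bar>\<xi> - \<eta>\<bar>" "\<bar>\<eta>\<bar> \<le> K * \<bar>\<xi> - \<eta>\<bar>" "1 \<le> K"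
    using assms unfolding K_def
    by (simp_all add: algebra_simps) (use abs_ge_zero[of "\<xi> - \<eta>"] in linarith)
  then have "jb \<xi> \<le> K * jb \<eta>" "jb \<xi> \<le> K * jb (\<xi> - \<eta>)" "jb \<eta> \<le> K * jb (\<xi> - \<eta>)"
    by (simp_all add: jb_le_mult)
  moreover have "jb \<xi> \<le> jb \<eta> + jb (\<xi> - \<eta>)"
    using abs_jb_diff_le[of \<xi> \<eta>] abs_le_jb[of "\<xi> - \<eta>"] by simp
  ultimately show ?thesis
    using assms unfolding Aw_eq_exp_sqrt_powr_jb K_def by (intro exp_sqrt_powr_diff_le_comparable jb_ge_1) auto
qed

theorem lemma6p5:
  fixes \<delta> s c :: real
  assumes "\<delta> > 0" and "s \<ge> 1" and "0 < c" and "c < 1"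
  shows "\<exists>C>0. \<forall>\<xi> \<eta> :: real.
     (\<bar>\<xi> - \<eta>\<bar> \<le> c * \<bar>\<eta>\<bar> \<longrightarrow>
        \<bar>Aw \<delta> s \<xi> - Aw \<delta> s \<eta>\<bar> \<le> C * Aw \<delta> (s - 3/4) \<eta> * Aw \<delta> 1 (\<xi> - \<eta>) * jb \<xi> powr (1/4))
   \<and> (\<bar>\<eta>\<bar> \<le> c * \<bar>\<xi> - \<eta>\<bar> \<longrightarrow>
        \<bar>Aw \<delta> s \<xi> - Aw \<delta> s \<eta>\<bar> \<le> C * Aw \<delta> 0 \<eta> * Aw \<delta> s (\<xi> - \<eta>))
   \<and> (c * \<bar>\<eta>\<bar> \<le> \<bar>\<xi> - \<eta>\<bar> \<and> \<bar>\<xi> - \<eta>\<bar> \<le> \<bar>\<eta>\<bar> / c \<longrightarrow>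
        \<bar>Aw \<delta> s \<xi> - Aw \<delta> s \<eta>\<bar> \<le> C * Aw \<delta> (s - 1) \<eta> * Aw \<delta> 1 (\<xi> - \<eta>))"
proof -
  define C\<^sub>1 where "C\<^sub>1 = (\<delta> / 2 + s) * 2 powr (s - 1/2) * (1 / (1 - c)) powr (1/4)"
  define C\<^sub>2 where "C\<^sub>2 = 2 powr s + (1 :: real)"
  define C\<^sub>3 where "C\<^sub>3 = (1 + 1 / c) powr s + (1 + 1 / c)"
  have C_pos: "0 < C\<^sub>1" "0 < C\<^sub>2" "0 < C\<^sub>3"
    using assms unfolding C\<^sub>1_def C\<^sub>2_def C\<^sub>3_def by (simp_all add: add_nonneg_pos)
  show ?thesis
  proof (intro exI[of _ "C\<^sub>1 + C\<^sub>2 + C\<^sub>3"] conjI allI impI)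
    fix \<xi> \<eta> :: real
    assume "\<bar>\<xi> - \<eta>\<bar> \<le> c * \<bar>\<eta>\<bar>"
    then have "\<bar>Aw \<delta> s \<xi> - Aw \<delta> s \<eta>\<bar> \<le> C\<^sub>1 * Aw \<delta> (s - 3/4) \<eta> * Aw \<delta> 1 (\<xi> - \<eta>) * jb \<xi> powr (1/4)"
      using assms unfolding C\<^sub>1_def by (intro Aw_diff_le_near) auto
    also have "\<dots> \<le> (C\<^sub>1 + C\<^sub>2 + C\<^sub>3) * Aw \<delta> (s - 3/4) \<eta> * Aw \<delta> 1 (\<xi> - \<eta>) * jb \<xi> powr (1/4)"
      using C_pos by (intro mult_right_mono) (auto simp: Aw_nonneg)
    finally show "\<bar>Aw \<delta> s \<xi> - Aw \<delta> s \<eta>\<bar> \<le> \<dots>" .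
  next
    fix \<xi> \<eta> :: real
    assume "\<bar>\<eta>\<bar> \<le> c * \<bar>\<xi> - \<eta>\<bar>"
    then have "\<bar>Aw \<delta> s \<xi> - Aw \<delta> s \<eta>\<bar> \<le> C\<^sub>2 * Aw \<delta> 0 \<eta> * Aw \<delta> s (\<xi> - \<eta>)"
      using assms unfolding C\<^sub>2_def by (intro Aw_diff_le_far) auto
    also have "\<dots> \<le> (C\<^sub>1 + C\<^sub>2 + C\<^sub>3) * Aw \<delta> 0 \<eta> * Aw \<delta> s (\<xi> - \<eta>)"
      using C_pos by (intro mult_right_mono) (auto simp: Aw_nonneg)
    finally show "\<bar>Aw \<delta> s \<xi> - Aw \<delta> s \<eta>\<bar> \<le> \<dots>" .
  next
    fix \<xi> \<eta> :: real
    assume "c * \<bar>\<eta>\<bar> \<le> \<bar>\<xi> - \<eta>\<bar> \<and> \<bar>\<xi> - \<eta>\<bar> \<le> \<bar>\<eta>\<bar> / c"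
    then have "\<bar>Aw \<delta> s \<xi> - Aw \<delta> s \<eta>\<bar> \<le> C\<^sub>3 * Aw \<delta> (s - 1) \<eta> * Aw \<delta> 1 (\<xi> - \<eta>)"
      using assms unfolding C\<^sub>3_def by (intro Aw_diff_le_comparable) auto
    also have "\<dots> \<le> (C\<^sub>1 + C\<^sub>2 + C\<^sub>3) * Aw \<delta> (s - 1) \<eta> * Aw \<delta> 1 (\<xi> - \<eta>)"
      using C_pos by (intro mult_right_mono) (auto simp: Aw_nonneg)
    finally show "\<bar>Aw \<delta> s \<xi> - Aw \<delta> s \<eta>\<bar> \<le> \<dots>" .
  qed (use C_pos in simp)
qed

end
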